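(* Let $q\ge2$ be even and $n\ge1$. There exists a code $\mathcal{C}\subseteq\Sigma_q^n$ capable of correcting a reverse-complement duplication of arbitrary length (i.e. $RC_k^1(\boldsymbol{x})\cap RC_k^1(\boldsymbol{z})=\varnothing$ for all distinct $\boldsymbol{x},\boldsymbol{z}\in\mathcal{C}$ and all $k\ge1$) with at most $3\log_q n$ redundant symbols, i.e. $n-\log_q|\mathcal{C}|\le 3\log_q n$.
   Context: $\Sigma_q=\{0,\dots,q-1\}$. A complement operation is a fixed bijection $a\mapsto\overline{a}$ on $\Sigma_q$ with $\overline{a}\ne a$, $\overline{\overline{a}}=a$; $\boldsymbol{v}^{RC}=\overline{v_k}\cdots\overline{v_1}$ for $\boldsymbol{v}=v_1\cdots v_k$. For $\boldsymbol{x}=\boldsymbol{u}\boldsymbol{v}\boldsymbol{w}\in\Sigma_q^n$ with $|\boldsymbol{u}|=i-1$, $|\boldsymbol{v}|=k$, $RC_{k,i}(\boldsymbol{x})=\boldsymbol{u}\boldsymbol{v}\boldsymbol{v}^{RC}\boldsymbol{w}$, and $RC_k^1(\boldsymbol{x})=\{RC_{k,i}(\boldsymbol{x}):i\in[1,n-k+1]\}$ (empty if $k>n$). *)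

theory Defs
  imports Complex_Main
begin

definition words :: "nat \<Rightarrow> nat \<Rightarrow> nat list set" where
  "words q n = {x. length x = n \<and> set x \<subseteq> {0..<q}}"

definition is_complement :: "nat \<Rightarrow> (nat \<Rightarrow> nat) \<Rightarrow> bool" where
  "is_complement q c \<longleftrightarrow> (\<forall>a<q. c a < q \<and> c a \<noteq> a \<and> c (c a) = a)"

definition rc :: "(nat \<Rightarrow> nat) \<Rightarrow> nat list \<Rightarrow> nat list" where
  "rc c v = rev (map c v)"

definition RC_dup :: "(nat \<Rightarrow> nat) \<Rightarrow> nat \<Rightarrow> nat \<Rightarrow> nat list \<Rightarrow> nat list" where
  "RC_dup c k i x =
     (let u = take (i - 1) x; v = take k (drop (i - 1) x); w = drop (i - 1 + k) x
      in u @ v @ rc c v @ w)"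

definition RC_ball :: "(nat \<Rightarrow> nat) \<Rightarrow> nat \<Rightarrow> nat list \<Rightarrow> nat list set" where
  "RC_ball c k x = {RC_dup c k i x | i. 1 \<le> i \<and> i + k \<le> length x + 1}"

end

theory Submission
  imports Defs
begin

text \<open>A Gilbert--Varshamov style argument.
  If y lies in the k-ball of z, then z is recovered from y by deleting k consecutive symbols
  starting at one of at most n positions. Every word confusable with x of length n is therefore
  determined by a length k \<le> n, an element of the k-ball of x (at most n of them) and a deletion
  position (at most n), so x is confusable with at most n^3 words. A greedy choice of pairwise
  non-confusable words keeps at least a 1/n^3 fraction of all q^n words, i.e. the redundancy is
  at most 3 log_q n.\<close>

lemma greedy_independent_set:
  assumes "finite V" and "symp R"
    and "\<And>x. x \<in> V \<Longrightarrow> card (insert x {z\<in>V. R x z}) \<le> d"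
  shows "\<exists>I\<subseteq>V. pairwise (\<lambda>x z. \<not> R x z) I \<and> card V \<le> d * card I"
  using assms(1,3)
proof (induction V rule: finite_psubset_induct)
  case (psubset V)
  show ?case
  proof (cases "V = {}")
    case True
    then show ?thesis by auto
  next
    case False
    then obtain x where x: "x \<in> V" by auto
    define N where "N = insert x {z\<in>V. R x z}"
    have "N \<subseteq> V" "finite N" "card N \<le> d"
      using x psubset N_def by (auto intro: finite_subset)
    then have card_V: "card V = card (V - N) + card N"
      using psubset.hyps by (simp add: card_Diff_subset card_mono)
    have smaller: "V - N \<subset> V"
      using x by (auto simp: N_def)
    have "card (insert y {z\<in>V - N. R y z}) \<le> d" if "y \<in> V - N" for y
    proof -
      have "card (insert y {z\<in>V - N. R y z}) \<le> card (insert y {z\<in>V. R y z})"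
        by (rule card_mono) (use psubset.hyps in auto)
      then show ?thesis
        using that psubset.prems by (meson DiffD1 order_trans)
    qed
    then obtain I where I: "I \<subseteq> V - N" "pairwise (\<lambda>x z. \<not> R x z) I" "card (V - N) \<le> d * card I"
      using psubset.IH[OF smaller] by blast
    have "x \<notin> I" "finite I"
      using I(1) psubset.hyps by (auto simp: N_def intro: finite_subset)
    moreover have "\<not> R x y \<and> \<not> R y x" if "y \<in> I" for y
      using that I(1) \<open>symp R\<close> by (auto simp: N_def dest: sympD)
    ultimately have "insert x I \<subseteq> V" "pairwise (\<lambda>x z. \<not> R x z) (insert x I)"
        "card V \<le> d * card (insert x I)"
      using x I \<open>card N \<le> d\<close> card_V by (auto simp: pairwise_insert)
    then show ?thesis by blast
  qed
qed

lemma card_words: "card (words q n) = q ^ n"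
  unfolding words_def using card_lists_length_eq[of "{0..<q}" n] by (simp add: conj_commute)

lemma finite_words: "finite (words q n)"
  unfolding words_def using finite_lists_length_eq[of "{0..<q}" n] by (simp add: conj_commute)

lemma diff_log_le_log_of_pow_le:
  fixes b d m :: real
  assumes "b > 1" "d > 0" "m > 0" "b ^ n \<le> d * m"
  shows "n - log b m \<le> log b d"
proof -
  have "n = log b (b ^ n)"
    using assms(1) by (simp add: log_nat_power)
  also have "\<dots> \<le> log b (d * m)"
    using assms by (subst log_le_cancel_iff) auto
  also have "\<dots> = log b d + log b m"
    using assms by (simp add: log_mult)
  finally show ?thesis
    by simp
qed

definition delete_segment :: "nat \<Rightarrow> nat \<Rightarrow> 'a list \<Rightarrow> 'a list" where
  "delete_segment m k y = take m y @ drop (m + k) y"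

definition rc_confusable :: "(nat \<Rightarrow> nat) \<Rightarrow> nat list \<Rightarrow> nat list \<Rightarrow> bool" where
  "rc_confusable c x z \<longleftrightarrow> (\<exists>k\<ge>1. RC_ball c k x \<inter> RC_ball c k z \<noteq> {})"

lemma symp_rc_confusable: "symp (rc_confusable c)"
  unfolding rc_confusable_def by (auto intro: sympI)

lemma length_RC_dup:
  assumes "1 \<le> i" "i + k \<le> length x + 1"
  shows "length (RC_dup c k i x) = length x + k"
  using assms by (simp add: RC_dup_def Let_def rc_def)

lemma delete_segment_RC_dup:
  assumes "1 \<le> i" "i + k \<le> length x + 1"
  shows "delete_segment (i - 1 + k) k (RC_dup c k i x) = x"
proof -
  let ?v = "take k (drop (i - 1) x)"
  have "length (take (i - 1) x) = i - 1" "length ?v = k" "length (rc c ?v) = k"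
    using assms by (simp_all add: rc_def)
  then have "take (i - 1 + k) (RC_dup c k i x) = take (i - 1) x @ ?v"
      and "drop (i - 1 + k + k) (RC_dup c k i x) = drop (i - 1 + k) x"
    by (simp_all add: RC_dup_def Let_def)
  then show ?thesis
    unfolding delete_segment_def by (metis append_take_drop_id take_add)
qed

lemma RC_ball_subset_image:
  "RC_ball c k x \<subseteq> (\<lambda>i. RC_dup c k i x) ` {1..length x + 1 - k}"
  unfolding RC_ball_def by auto

lemma finite_RC_ball: "finite (RC_ball c k x)"
  by (rule finite_subset[OF RC_ball_subset_image]) simp

lemma card_RC_ball_le: "card (RC_ball c k x) \<le> length x + 1 - k"
proof -
  have "card (RC_ball c k x) \<le> card ((\<lambda>i. RC_dup c k i x) ` {1..length x + 1 - k})"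
    by (rule card_mono[OF _ RC_ball_subset_image]) simp
  also have "\<dots> \<le> length x + 1 - k"
    using card_image_le[of "{1..length x + 1 - k}"] by simp
  finally show ?thesis .
qed

lemma rc_confusable_refl:
  assumes "length x \<ge> 1"
  shows "rc_confusable c x x"
proof -
  have "RC_dup c 1 1 x \<in> RC_ball c 1 x"
    using assms unfolding RC_ball_def by auto
  then show ?thesis
    unfolding rc_confusable_def by blast
qed

lemma rc_confusable_length:
  assumes "rc_confusable c x z"
  shows "length z = length x"
proof -
  obtain k i j where "k \<ge> 1" "RC_dup c k i x = RC_dup c k j z"
      "1 \<le> i" "i + k \<le> length x + 1" "1 \<le> j" "j + k \<le> length z + 1"
    using assms unfolding rc_confusable_def RC_ball_def by blast
  then show ?thesis
    using length_RC_dup by (metis add_right_cancel)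
qed

lemma rc_confusable_subset:
  fixes x :: "nat list"
  defines "n \<equiv> length x"
  shows "{z. rc_confusable c x z} \<subseteq>
    (\<Union>k\<in>{1..n}. \<Union>y\<in>RC_ball c k x. (\<lambda>i. delete_segment (i - 1 + k) k y) ` {1..n})"
proof
  fix z assume "z \<in> {z. rc_confusable c x z}"
  then obtain k y where "k \<ge> 1" "y \<in> RC_ball c k x" "y \<in> RC_ball c k z" "length z = n"
    using rc_confusable_length unfolding rc_confusable_def n_def by fastforce
  moreover from \<open>y \<in> RC_ball c k z\<close> obtain i where "1 \<le> i" "i + k \<le> length z + 1" "y = RC_dup c k i z"
    unfolding RC_ball_def by blast
  ultimately have "z = delete_segment (i - 1 + k) k y" "i \<in> {1..n}" "k \<in> {1..n}"
    using delete_segment_RC_dup[of i k z c] by auto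
  with \<open>y \<in> RC_ball c k x\<close>
  show "z \<in> (\<Union>k\<in>{1..n}. \<Union>y\<in>RC_ball c k x. (\<lambda>i. delete_segment (i - 1 + k) k y) ` {1..n})"
    by blast
qed

lemma finite_rc_confusable: "finite {z. rc_confusable c x z}"
  by (rule finite_subset[OF rc_confusable_subset]) (simp add: finite_RC_ball)

lemma card_rc_confusable_le: "card {z. rc_confusable c x z} \<le> length x ^ 3"
proof -
  define n where "n = length x"
  define del where "del (y :: nat list) k = (\<lambda>i. delete_segment (i - 1 + k) k y) ` {1..n}" for y k
  have "card {z. rc_confusable c x z} \<le> card (\<Union>k\<in>{1..n}. \<Union>y\<in>RC_ball c k x. del y k)"
    using rc_confusable_subset[of c x] unfolding n_def del_def
    by (intro card_mono) (simp_all add: finite_RC_ball)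
  also have "\<dots> \<le> (\<Sum>k\<in>{1..n}. \<Sum>y\<in>RC_ball c k x. card (del y k))"
    by (intro order_trans[OF card_UN_le] sum_mono card_UN_le) (simp_all add: finite_RC_ball)
  also have "\<dots> \<le> (\<Sum>k\<in>{1..n}. \<Sum>y\<in>RC_ball c k x. n)"
    unfolding del_def by (intro sum_mono order_trans[OF card_image_le]) simp_all
  also have "\<dots> \<le> (\<Sum>k\<in>{1..n}. n * n)"
  proof (intro sum_mono)
    fix k :: nat assume "k \<in> {1..n}"
    then have "card (RC_ball c k x) \<le> n"
      using card_RC_ball_le[of c k x] unfolding n_def by simp linarith
    then show "(\<Sum>y\<in>RC_ball c k x. n) \<le> n * n"
      by simp
  qed
  also have "\<dots> = n ^ 3"
    by (simp add: power3_eq_cube)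
  finally show ?thesis
    by (simp add: n_def)
qed

lemma card_closed_rc_neighbourhood_le:
  assumes "length x \<ge> 1"
  shows "card (insert x {z\<in>V. rc_confusable c x z}) \<le> length x ^ 3"
proof -
  have "insert x {z\<in>V. rc_confusable c x z} \<subseteq> {z. rc_confusable c x z}"
    using rc_confusable_refl[OF assms] by auto
  then have "card (insert x {z\<in>V. rc_confusable c x z}) \<le> card {z. rc_confusable c x z}"
    by (rule card_mono[OF finite_rc_confusable])
  then show ?thesis
    using card_rc_confusable_le[of c x] by linarith
qed

theorem lemma7:
  fixes q n :: nat and c :: "nat \<Rightarrow> nat"
  assumes "q \<ge> 2" and "even q" and "n \<ge> 1" and "is_complement q c"
  shows "\<exists>C \<subseteq> words q n. C \<noteq> {} \<and>
           (\<forall>x\<in>C. \<forall>z\<in>C. x \<noteq> z \<longrightarrow> (\<forall>k\<ge>1. RC_ball c k x \<inter> RC_ball c k z = {})) \<and>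
           real n - log (real q) (real (card C)) \<le> 3 * log (real q) (real n)"
proof -
  have "card (insert x {z\<in>words q n. rc_confusable c x z}) \<le> n ^ 3" if "x \<in> words q n" for x
    using that assms(3) card_closed_rc_neighbourhood_le[of x "words q n" c]
    unfolding words_def by auto
  from greedy_independent_set[OF finite_words symp_rc_confusable this]
  obtain C where C: "C \<subseteq> words q n" "pairwise (\<lambda>x z. \<not> rc_confusable c x z) C"
      "q ^ n \<le> n ^ 3 * card C"
    by (auto simp: card_words)
  moreover have "q ^ n > 0"
    using assms(1) by simp
  ultimately have "card C > 0" "real q ^ n \<le> real n ^ 3 * real (card C)"
    by (metis gr0I mult_0_right not_le, metis of_nat_le_iff of_nat_mult of_nat_power)
  then have "real n - log q (card C) \<le> log q (real n ^ 3)"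
    using assms(1,3) by (intro diff_log_le_log_of_pow_le) simp_all
  also have "\<dots> = 3 * log q n"
    using assms(3) by (simp add: log_nat_power)
  finally have redundancy: "real n - log q (card C) \<le> 3 * log q n" .
  have "\<forall>x\<in>C. \<forall>z\<in>C. x \<noteq> z \<longrightarrow> (\<forall>k\<ge>1. RC_ball c k x \<inter> RC_ball c k z = {})"
    using C(2) unfolding pairwise_def rc_confusable_def by blast
  moreover have "C \<noteq> {}"
    using \<open>card C > 0\<close> by auto
  ultimately show ?thesis
    using C(1) redundancy by blast
qed

end
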